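(* Let $q$ be a prime power and let $s,t,n,k$ be nonnegative integers with $t$ even and $n=2k$. Let $\beta\in\mathbb{F}_{q^k}$, $\gamma\in\mathbb{F}_q^*$, and $\delta\in\mathbb{F}_{q^n}$ with $\delta^{q^k}=-\delta$. Then $$f(x)=(x^{q^k}-x+\delta)^t+\beta\,\mathrm{Tr}(x)+\gamma x^{q^s}$$ is a permutation polynomial of $\mathbb{F}_{q^n}$ if and only if $\mathrm{Tr}(\beta\gamma^{-1})+1\neq0$.
   Context: $\mathrm{Tr}$ denotes the trace function from $\mathbb{F}_{q^n}$ to $\mathbb{F}_q$, $\mathrm{Tr}(x)=x+x^q+\cdots+x^{q^{n-1}}$. A permutation polynomial of $\mathbb{F}_{q^n}$ is one inducing a bijection of $\mathbb{F}_{q^n}$. *)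

theory Defs
  imports "HOL-Computational_Algebra.Primes"
begin

text \<open>Trace from F_{q^n} to F_q, where F_{q^n} is the whole (finite) field type.\<close>
definition trace :: "nat \<Rightarrow> nat \<Rightarrow> 'a::field \<Rightarrow> 'a" where
  "trace q n x = (\<Sum>i<n. x ^ (q ^ i))"

definition subfield_elems :: "nat \<Rightarrow> nat \<Rightarrow> 'a::field set" where
  "subfield_elems q m = {x. x ^ (q ^ m) = x}"

definition prime_power :: "nat \<Rightarrow> bool" where
  "prime_power q \<longleftrightarrow> (\<exists>p m. prime p \<and> m > 0 \<and> q = p ^ m)"

end

theory Submission
  imports Defs "HOL-Number_Theory.Residues" "HOL-Algebra.Algebraic_Closure_Type"
begin

text \<open>
  Write \<open>Q = q^k\<close>; then \<open>x \<mapsto> x^Q\<close> is the conjugation of \<open>F_{q^n}\<close> over \<open>F_{q^k}\<close>.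
  It maps \<open>x^Q - x + \<delta>\<close> to its negative, so even powers of this element are fixed, as are
  \<open>\<beta> Tr(x)\<close> and \<open>\<gamma>\<close>; hence \<open>f(x)^Q - f(x) = \<gamma> (x^Q - x)^{q^s}\<close>. Thus \<open>f(x) = f(x')\<close> forces
  \<open>x' - x \<in> F_{q^k}\<close>, while translating by \<open>c \<in> F_{q^k}\<close> adds \<open>L(c) = \<beta> Tr(c) + \<gamma> c^{q^s}\<close>
  to \<open>f\<close>. So \<open>f\<close> permutes the field iff \<open>L\<close> has no nonzero root in \<open>F_{q^k}\<close>. A root
  satisfies \<open>c^{q^s} = -Tr(c) \<beta>/\<gamma>\<close>, and taking traces gives \<open>Tr(c) (Tr(\<beta>/\<gamma>) + 1) = 0\<close>;
  conversely, if \<open>Tr(\<beta>/\<gamma>) = -1\<close>, the \<open>q^s\<close>-th root of \<open>-\<beta>/\<gamma>\<close> is a nonzero root.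
\<close>

lemma power_card_eq_self:
  fixes x :: "'a::{field,finite}"
  shows "x ^ card (UNIV :: 'a set) = x"
proof (cases "x = 0")
  case False
  define R where "R = (ring_of_type_algebra :: 'a ring)"
  interpret R: field R
    unfolding R_def by rule
  have carrier: "carrier R = UNIV" and zero: "\<zero>\<^bsub>R\<^esub> = 0" and one: "\<one>\<^bsub>R\<^esub> = 1"
    by (simp_all add: R_def ring_of_type_algebra_def)
  have pow: "x [^]\<^bsub>R\<^esub> m = x ^ m" for m :: nat
    by (induction m) (simp_all add: R_def ring_of_type_algebra_def)
  have "x [^]\<^bsub>Multiplicative_Group.mult_of R\<^esub> Coset.order (Multiplicative_Group.mult_of R)
      = \<one>\<^bsub>Multiplicative_Group.mult_of R\<^esub>"
    using group.pow_order_eq_1[OF R.field_mult_group] False by (simp add: carrier zero)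
  moreover have "card (carrier (Multiplicative_Group.mult_of R)) = card (UNIV :: 'a set) - 1"
    by (simp add: carrier zero card_Diff_singleton)
  ultimately have "x [^]\<^bsub>R\<^esub> (card (UNIV :: 'a set) - 1) = \<one>\<^bsub>R\<^esub>"
    by (simp only: Multiplicative_Group.nat_pow_mult_of Multiplicative_Group.one_mult_of
        Coset.order_def)
  then have "x ^ (card (UNIV :: 'a set) - 1) = 1"
    by (simp only: pow one)
  moreover have "card (UNIV :: 'a set) > 0"
    by (simp add: card_gt_0_iff)
  ultimately show ?thesis
    by (simp add: power_eq_if)
qed (simp add: card_gt_0_iff)

locale frobenius_field =
  fixes field_type :: "'a::{field,finite} itself" and q n :: nat
  assumes q_pos: "q > 0"
    and add_power_q: "\<And>x y :: 'a. (x + y) ^ q = x ^ q + y ^ q"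
    and power_q_power_n: "\<And>x :: 'a. x ^ q ^ n = x"
begin

lemma add_power_q_power: "((x::'a) + y) ^ q ^ j = x ^ q ^ j + y ^ q ^ j"
proof (induction j arbitrary: x y)
  case (Suc j)
  have "(x + y) ^ q ^ Suc j = ((x + y) ^ q) ^ q ^ j"
    by (simp add: power_mult mult.commute)
  also have "\<dots> = (x ^ q) ^ q ^ j + (y ^ q) ^ q ^ j"
    by (simp add: add_power_q Suc)
  finally show ?case
    by (simp add: power_mult[symmetric] mult.commute)
qed simp

lemma zero_power_q_power [simp]: "(0::'a) ^ q ^ j = 0"
  using q_pos by simp

lemma minus_power_q_power: "(- (x::'a)) ^ q ^ j = - (x ^ q ^ j)"
  using add_power_q_power[of x "- x" j] by (simp add: eq_neg_iff_add_eq_0 add.commute)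

lemma diff_power_q_power: "((x::'a) - y) ^ q ^ j = x ^ q ^ j - y ^ q ^ j"
  using add_power_q_power[of x "- y" j] minus_power_q_power[of y j] by simp

lemma sum_power_q_power: "(\<Sum>i\<in>A. (g i :: 'a)) ^ q ^ j = (\<Sum>i\<in>A. g i ^ q ^ j)"
  by (induction A rule: infinite_finite_induct) (auto simp: add_power_q_power)

lemma power_q_power_power_q_power: "((x::'a) ^ q ^ i) ^ q ^ j = x ^ q ^ (i + j)"
  by (simp add: power_mult power_add)

lemma power_q_power_fixed: "(x::'a) ^ q = x \<Longrightarrow> x ^ q ^ j = x"
  by (induction j) (simp_all add: power_mult mult.commute)

lemma power_q_power_eq_iff: "(x::'a) ^ q ^ j = y ^ q ^ j \<longleftrightarrow> x = y"
  using diff_power_q_power[of x y j] by (metis eq_iff_diff_eq_0 power_eq_0_iff)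

lemma surj_power_q_power: "surj (\<lambda>x::'a. x ^ q ^ j)"
  by (simp add: finite_UNIV_inj_surj inj_def power_q_power_eq_iff)

lemma trace_power_q_power: "trace q n ((x::'a) ^ q ^ j) = trace q n x"
proof (induction j)
  case (Suc j)
  let ?y = "x ^ q ^ j"
  have "trace q n (?y ^ q) = (\<Sum>i<n. ?y ^ q ^ Suc i)"
    unfolding trace_def by (simp add: mult_ac flip: power_mult)
  also have "\<dots> = (\<Sum>i<Suc n. ?y ^ q ^ i) - ?y"
    by (subst sum.lessThan_Suc_shift) simp
  also have "\<dots> = trace q n ?y"
    by (simp add: trace_def power_q_power_n)
  finally show ?case
    using Suc by (metis power_Suc2 power_mult)
qed simp

lemma trace_power_q: "trace q n (x::'a) ^ q = trace q n x"
proof -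
  have "trace q n x ^ q = (\<Sum>i<n. (x ^ q ^ i) ^ q)"
    using sum_power_q_power[of _ _ 1] by (simp add: trace_def)
  also have "\<dots> = trace q n (x ^ q ^ 1)"
    by (simp add: trace_def flip: power_mult) (simp add: mult.commute)
  finally show ?thesis
    by (simp only: trace_power_q_power)
qed

lemma trace_add: "trace q n ((x::'a) + y) = trace q n x + trace q n y"
  by (simp add: trace_def add_power_q_power sum.distrib)

lemma trace_minus: "trace q n (- (x::'a)) = - trace q n x"
  by (simp add: trace_def minus_power_q_power sum_negf)

lemma trace_mult_fixed: "(c::'a) ^ q = c \<Longrightarrow> trace q n (c * x) = c * trace q n x"
  by (simp add: trace_def power_mult_distrib power_q_power_fixed sum_distrib_left)

lemma trace_zero [simp]: "trace q n (0::'a) = 0"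
  by (simp add: trace_def)

lemma conj_minus_self_add_antifixed:
  assumes "n = 2 * k" and "(\<delta>::'a) ^ q ^ k = - \<delta>"
  shows "((x::'a) ^ q ^ k - x + \<delta>) ^ q ^ k = - (x ^ q ^ k - x + \<delta>)"
proof -
  have "(x ^ q ^ k) ^ q ^ k = x"
    using assms(1) power_q_power_n by (simp add: power_q_power_power_q_power mult_2)
  then show ?thesis
    using assms(2) by (simp add: add_power_q_power diff_power_q_power)
qed

lemma bij_iff_no_fixed_root:
  fixes f L :: "'a \<Rightarrow> 'a" and \<gamma> :: 'a
  assumes conj: "\<And>x. f x ^ q ^ k - f x = \<gamma> * (x ^ q ^ k - x) ^ q ^ s"
    and "\<gamma> \<noteq> 0"
    and shift: "\<And>x c. c ^ q ^ k = c \<Longrightarrow> f (x + c) = f x + L c"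
  shows "bij f \<longleftrightarrow> \<not> (\<exists>c. c \<noteq> 0 \<and> c ^ q ^ k = c \<and> L c = 0)"
proof
  assume "bij f"
  then have "inj f"
    by (rule bij_is_inj)
  show "\<not> (\<exists>c. c \<noteq> 0 \<and> c ^ q ^ k = c \<and> L c = 0)"
  proof
    assume "\<exists>c. c \<noteq> 0 \<and> c ^ q ^ k = c \<and> L c = 0"
    then obtain c where "c \<noteq> 0" "c ^ q ^ k = c" "L c = 0"
      by blast
    then have "f c = f 0"
      using shift[of c 0] by simp
    with \<open>inj f\<close> \<open>c \<noteq> 0\<close> show False
      by (simp add: inj_eq)
  qed
next
  assume no_root: "\<not> (\<exists>c. c \<noteq> 0 \<and> c ^ q ^ k = c \<and> L c = 0)"
  have "inj f"
  proof (rule injI)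
    fix x x' assume eq: "f x = f x'"
    have "\<gamma> * (x ^ q ^ k - x) ^ q ^ s = \<gamma> * (x' ^ q ^ k - x') ^ q ^ s"
      by (simp only: conj[symmetric] eq)
    then have "x ^ q ^ k - x = x' ^ q ^ k - x'"
      using \<open>\<gamma> \<noteq> 0\<close> by (simp add: power_q_power_eq_iff)
    then have fixed: "(x' - x) ^ q ^ k = x' - x"
      by (simp add: diff_power_q_power algebra_simps)
    have "f x + L (x' - x) = f x"
      using shift[OF fixed, of x] eq by simp
    then show "x = x'"
      using no_root fixed by auto
  qed
  then show "bij f"
    by (simp add: bij_def finite_UNIV_inj_surj)
qed

lemma fixed_root_iff_trace:
  fixes \<beta> \<gamma> :: 'a
  assumes \<beta>: "\<beta> ^ q ^ k = \<beta>" and \<gamma>: "\<gamma> ^ q = \<gamma>" "\<gamma> \<noteq> 0"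
  shows "(\<exists>c. c \<noteq> 0 \<and> c ^ q ^ k = c \<and> \<beta> * trace q n c + \<gamma> * c ^ q ^ s = 0)
    \<longleftrightarrow> trace q n (\<beta> * inverse \<gamma>) = - 1"
    (is "(\<exists>c. ?root c) \<longleftrightarrow> _")
proof
  assume "\<exists>c. ?root c"
  then obtain c where "c \<noteq> 0" and root: "\<beta> * trace q n c + \<gamma> * c ^ q ^ s = 0"
    by blast
  define T where "T = trace q n c"
  have c_power: "c ^ q ^ s = - (T * (\<beta> * inverse \<gamma>))"
    using root \<gamma>(2) unfolding T_def by (simp add: field_simps eq_neg_iff_add_eq_0)
  have "T = trace q n (c ^ q ^ s)"
    by (simp add: T_def trace_power_q_power)
  also have "\<dots> = - (T * trace q n (\<beta> * inverse \<gamma>))"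
    unfolding c_power trace_minus T_def by (simp add: trace_mult_fixed trace_power_q)
  finally have "T * (trace q n (\<beta> * inverse \<gamma>) + 1) = 0"
    by (simp add: algebra_simps eq_neg_iff_add_eq_0)
  moreover have "T \<noteq> 0"
    using c_power \<open>c \<noteq> 0\<close> by auto
  ultimately show "trace q n (\<beta> * inverse \<gamma>) = - 1"
    by (simp add: eq_neg_iff_add_eq_0)
next
  assume trace_b: "trace q n (\<beta> * inverse \<gamma>) = - 1"
  obtain d where d: "d ^ q ^ s = - (\<beta> * inverse \<gamma>)"
    using surj_power_q_power[of s] by (metis surjD)
  have "(\<beta> * inverse \<gamma>) ^ q ^ k = \<beta> * inverse \<gamma>"
    using \<beta> power_q_power_fixed[OF \<gamma>(1)] by (simp add: power_mult_distrib power_inverse)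
  then have "(d ^ q ^ s) ^ q ^ k = d ^ q ^ s"
    by (simp add: d minus_power_q_power)
  then have "(d ^ q ^ k) ^ q ^ s = d ^ q ^ s"
    by (simp only: power_q_power_power_q_power add.commute)
  then have "d ^ q ^ k = d"
    by (simp add: power_q_power_eq_iff)
  moreover have "trace q n d = 1"
    using trace_power_q_power[of d s] trace_b by (simp add: d trace_minus)
  moreover have "\<beta> * trace q n d + \<gamma> * d ^ q ^ s = 0"
    using \<open>trace q n d = 1\<close> \<gamma>(2) by (simp add: d)
  ultimately show "\<exists>c. ?root c"
    by (metis one_neq_zero trace_zero)
qed

end

lemma frobenius_field_prime_power_card:
  assumes "prime_power q" and "card (UNIV :: 'a::{field,finite} set) = q ^ n"
  shows "frobenius_field TYPE('a) q n"
proof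
  obtain p m where "Factorial_Ring.prime p" "m > 0" and q: "q = p ^ m"
    using assms(1) unfolding prime_power_def by blast
  have "Factorial_Ring.prime CHAR('a)"
    by (simp add: finite_imp_CHAR_pos prime_CHAR_semidom)
  moreover have "CHAR('a) dvd p ^ (m * n)"
    using CHAR_dvd_CARD[where 'a='a] assms(2) q by (simp add: power_mult)
  ultimately have "CHAR('a) = p"
    using \<open>Factorial_Ring.prime p\<close> by (metis prime_dvd_power primes_dvd_imp_eq)
  then show "(x + y) ^ q = x ^ q + y ^ q" for x y :: 'a
    using freshmans_dream' \<open>Factorial_Ring.prime CHAR('a)\<close> q by blast
  show "q > 0"
    using \<open>Factorial_Ring.prime p\<close> q by (simp add: prime_gt_0_nat)
  show "x ^ q ^ n = x" for x :: 'a
    using power_card_eq_self[of x] assms(2) by simp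
qed

theorem mainTheorem4:
  fixes q s t n k :: nat
    and \<beta> \<gamma> \<delta> :: "'a::{field,finite}"
  assumes "prime_power q"
    and "card (UNIV :: 'a set) = q ^ n"
    and "even t"
    and "n = 2 * k"
    and "\<beta> \<in> subfield_elems q k"
    and "\<gamma> \<in> subfield_elems q 1" and "\<gamma> \<noteq> 0"
    and "\<delta> ^ (q ^ k) = - \<delta>"
  shows "bij (\<lambda>x::'a. (x ^ (q ^ k) - x + \<delta>) ^ t + \<beta> * trace q n x + \<gamma> * x ^ (q ^ s))
         \<longleftrightarrow> trace q n (\<beta> * inverse \<gamma>) + 1 \<noteq> 0"
proof -
  interpret frobenius_field "TYPE('a)" q n
    using assms(1,2) by (rule frobenius_field_prime_power_card)
  let ?f = "\<lambda>x::'a. (x ^ (q ^ k) - x + \<delta>) ^ t + \<beta> * trace q n x + \<gamma> * x ^ (q ^ s)"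
  have \<beta>: "\<beta> ^ q ^ k = \<beta>" and \<gamma>: "\<gamma> ^ q = \<gamma>"
    using assms(5,6) by (simp_all add: subfield_elems_def)
  have conj: "?f x ^ q ^ k - ?f x = \<gamma> * (x ^ q ^ k - x) ^ q ^ s" for x
  proof -
    let ?u = "x ^ q ^ k - x + \<delta>"
    have "(?u ^ t) ^ q ^ k = (?u ^ q ^ k) ^ t"
      by (simp only: mult.commute flip: power_mult)
    also have "\<dots> = ?u ^ t"
      by (simp only: conj_minus_self_add_antifixed[OF assms(4,8)] power_minus_even[OF assms(3)])
    finally have "(?u ^ t) ^ q ^ k = ?u ^ t" .
    moreover have "trace q n x ^ q ^ k = trace q n x"
      by (rule power_q_power_fixed[OF trace_power_q])
    ultimately show ?thesis
      using \<beta> power_q_power_fixed[OF \<gamma>]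
      by (simp add: add_power_q_power diff_power_q_power power_mult_distrib
          power_q_power_power_q_power add.commute right_diff_distrib)
  qed
  have shift: "?f (x + c) = ?f x + (\<beta> * trace q n c + \<gamma> * c ^ q ^ s)" if "c ^ q ^ k = c" for x c
    using that by (simp add: add_power_q_power trace_add algebra_simps)
  show ?thesis
    using bij_iff_no_fixed_root[where f = ?f, OF conj assms(7) shift]
      fixed_root_iff_trace[OF \<beta> \<gamma> assms(7)]
    by (simp add: eq_neg_iff_add_eq_0)
qed

end
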